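(* Suppose Assumptions 1, 2 and 3 hold, let $\Sigma=\Sigma_{\mathcal U}+\Sigma_{\mathcal V}+\Sigma_{\mathcal W}1_21_2^\top=\begin{pmatrix}\Sigma_{1,1}&\Sigma_{1,2}\\\Sigma_{1,2}&\Sigma_{2,2}\end{pmatrix}$ be the asymptotic covariance matrix of $\sqrt n(\hat\tau^{adj}-\tau,\hat\tau^{unadj}-\tau)^\top$ given below, assume $\Sigma_{1,1}-2\Sigma_{1,2}+\Sigma_{2,2}>0$, and let $\hat\Sigma=\begin{pmatrix}\hat\Sigma_{1,1}&\hat\Sigma_{1,2}\\\hat\Sigma_{1,2}&\hat\Sigma_{2,2}\end{pmatrix}$ be any estimator with $\hat\Sigma\to_p\Sigma$. Define $\hat w=\frac{\hat\Sigma_{2,2}-\hat\Sigma_{1,2}}{\hat\Sigma_{1,1}+\hat\Sigma_{2,2}-2\hat\Sigma_{1,2}}$ and $\hat\tau^*=\hat w\hat\tau^{adj}+(1-\hat w)\hat\tau^{unadj}$. Then $$\sqrt n\big[(\hat w,1-\hat w)\hat\Sigma(\hat w,1-\hat w)^\top\big]^{-1/2}(\hat\tau^*-\tau)\rightsquigarrow\mathcal N(0,1),$$ and the asymptotic variance of $\sqrt n(\hat\tau^*-\tau)$, namely $\min_{w\in\mathbb R}(w,1-w)\Sigma(w,1-w)^\top$, is no larger than the asymptotic variances $\Sigma_{1,1}$ of $\sqrt n(\hat\tau^{adj}-\tau)$ and $\Sigma_{2,2}$ of $\sqrt n(\hat\tau^{unadj}-\tau)$.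
   Context: Setup. Units $i\in[n]$ have potential outcomes $Y_i(1),Y_i(0)$, stratum $S_i\in\mathcal S$ (fixed finite set), covariates $X_i\in\mathbb R^{k_n}$, treatment $A_i\in\{0,1\}$, observed $Y_i=A_iY_i(1)+(1-A_i)Y_i(0)$. $n_s=\sum_i1\{S_i=s\}$, $n_{1,s}=\sum_iA_i1\{S_i=s\}$, $n_{0,s}=n_s-n_{1,s}$, $\aleph_{a,s}=\{i:A_i=a,S_i=s\}$, $\aleph_s=\aleph_{1,s}\cup\aleph_{0,s}$, $\hat p_s=n_s/n$; $\tau=E[Y(1)-Y(0)]$. Assumption 1. (i) $\{(Y_i(1),Y_i(0),S_i,X_i)\}_{i\in[n]}$ i.i.d.; (ii) $\{Y_i(1),Y_i(0),X_i\}_i$ independent of $\{A_i\}_i$ given $\{S_i\}_i$; (iii) $p_s=P(S_i=s)>0$ fixed in $n$; (iv) target fractions $\pi_s$ with $c<\min_s\pi_s\le\max_s\pi_s<1-c$, $c\in(0,1/2)$, and $\sum_i(A_i-\pi_s)1\{S_i=s\}/n_s=o_P(1)$. Estimators: $\hat\tau^{unadj}=\sum_s\hat p_s(\frac1{n_{1,s}}\sum_{i\in\aleph_{1,s}}Y_i-\frac1{n_{0,s}}\sum_{i\in\aleph_{0,s}}Y_i)$; with $\bar X_s=n_s^{-1}\sum_{i\in\aleph_s}X_i$, $\breve X_i=X_i-\bar X_{S_i}$, $(\hat\tau_{a,s},\hat\beta_{a,s})$ the intercept and slope of OLS of $Y_i$ on $(1,\breve X_i)$ over $i\in\aleph_{a,s}$,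 and $\hat\tau^{adj}=\sum_s\hat p_s(\hat\tau_{1,s}-\hat\tau_{0,s})$. $\breve X_{\aleph_{a,s}}$: $n_{a,s}\times k_n$ matrix of rows $\breve X_i^\top$, $i\in\aleph_{a,s}$; $P_{a,s}=\breve X_{\aleph_{a,s}}(\breve X_{\aleph_{a,s}}^\top\breve X_{\aleph_{a,s}})^{-1}\breve X_{\aleph_{a,s}}^\top$, $M_{a,s}=I-P_{a,s}$ (entries $P_{a,s,i,j},M_{a,s,i,j}$). $\varepsilon_i(a)=Y_i(a)-E(Y_i(a)|X_i,S_i)$; $\gamma_{a,s,n}=1^\top M_{a,s}1/n_{a,s}$; $\sigma^2_{a,s,n}=\frac1{n_{a,s}}\sum_{i\in\aleph_{a,s}}(\sum_jM_{a,s,i,j})^2E(\varepsilon_i^2(a)|X_i,S_i=s)$; $\rho_{a,s,n}=\frac1{n_{a,s}}\sum_{i\in\aleph_{a,s}}(\sum_jM_{a,s,i,j})E(\varepsilon_i^2(a)|X_i,S_i=s)$. Assumption 2. (i) $\max_iE[\varepsilon_i^4(a)|X_i,S_i]=O_P(1)$; (ii) $\min_{a,s,i}E[\varepsilon_i^2(a)|X_i,S_i=s]\ge b>0$; (iii) $k_n/n_{a,s}\to\kappa_{a,s}\in[0,1)$, $\limsup_n\max_{a,s,i}P_{a,s,i,i}\le1-\delta$ a.s., $\delta\in(0,1)$; (iv) $E(Y_i(a)|X_i,S_i=s)=\alpha_{a,s}+X_i^\top\beta_{a,s}+e_{i,s}(a)$, $E(e^2_{i,s}(a)|S_i=s)=o(n^{-1})$;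 (v) $\max_{a,s}\max_{i\in\aleph_{a,s}}|\sum_{j\in\aleph_{a,s}}M_{a,s,i,j}|=o_P(n^{1/2})$. Assumption 3. $\gamma_{a,s,n}\to_p\gamma_{a,s,\infty}>0$, $\gamma_{a,s,n}^{-2}\sigma^2_{a,s,n}\to_p\omega^2_{a,s,\infty}>0$, $\gamma_{a,s,n}^{-1}\rho_{a,s,n}\to_p\varpi_{a,s,\infty}$ (deterministic limits). The matrix $\Sigma$: with $\phi_i(a)=E(Y_i(a)|X_i,S_i)-E(Y_i(a)|S_i)$, $\Sigma_{1,1}=E\big(\frac{\omega^2_{1,S_i,\infty}}{\pi_{S_i}}+\frac{\omega^2_{0,S_i,\infty}}{1-\pi_{S_i}}\big)+E\,\mathrm{var}(\phi_i(1)-\phi_i(0)|S_i)+\Sigma_{\mathcal W}$, $\Sigma_{1,2}=E\big(\frac{\varpi_{1,S_i,\infty}}{\pi_{S_i}}+\frac{\varpi_{0,S_i,\infty}}{1-\pi_{S_i}}\big)+E\,\mathrm{var}(\phi_i(1)-\phi_i(0)|S_i)+\Sigma_{\mathcal W}$, $\Sigma_{2,2}=E\big(\frac{E(\varepsilon_i^2(1)|S_i)}{\pi_{S_i}}+\frac{E(\varepsilon_i^2(0)|S_i)}{1-\pi_{S_i}}\big)+E\big[\frac{\mathrm{var}(\phi_i(1)|S_i)}{\pi_{S_i}}+\frac{\mathrm{var}(\phi_i(0)|S_i)}{1-\pi_{S_i}}\big]+\Sigma_{\mathcal W}$, where $\Sigma_{\mathcal W}=\mathrm{var}(E(Y_i(1)-Y_i(0)|S_i))$.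 (Under Assumptions 1–3, $\sqrt n(\hat\tau^{adj}-\tau,\hat\tau^{unadj}-\tau)^\top\rightsquigarrow\mathcal N(0,\Sigma)$.) *)

theory Defs
  imports "HOL-Probability.Probability"
begin

definition conv_in_prob :: "(nat \<Rightarrow> 'a measure) \<Rightarrow> (nat \<Rightarrow> 'a \<Rightarrow> real) \<Rightarrow> real \<Rightarrow> bool" where
  "conv_in_prob M X c \<longleftrightarrow>
     (\<forall>e>0. (\<lambda>n. measure (M n) {x \<in> space (M n). e < \<bar>X n x - c\<bar>}) \<longlonglongrightarrow> 0)"

definition conv_in_distr2 ::
  "(nat \<Rightarrow> 'a measure) \<Rightarrow> (nat \<Rightarrow> 'a \<Rightarrow> real \<times> real) \<Rightarrow> (real \<times> real) measure \<Rightarrow> bool" where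
  "conv_in_distr2 M Z L \<longleftrightarrow>
     (\<forall>f :: real \<times> real \<Rightarrow> real. continuous_on UNIV f \<and> bounded (range f) \<longrightarrow>
        (\<lambda>n. \<integral>x. f (Z n x) \<partial>(M n)) \<longlonglongrightarrow> (\<integral>z. f z \<partial>L))"

definition quad2 :: "real \<Rightarrow> real \<Rightarrow> real \<Rightarrow> real \<Rightarrow> real \<Rightarrow> real" where
  "quad2 S11 S12 S22 a b = a\<^sup>2 * S11 + 2 * a * b * S12 + b\<^sup>2 * S22"

definition normal_law :: "real \<Rightarrow> real measure" where
  "normal_law v = (if v = 0 then return borel 0 else density lborel (normal_density 0 (sqrt v)))"

definition bivariate_normal :: "real \<Rightarrow> real \<Rightarrow> real \<Rightarrow> (real \<times> real) measure \<Rightarrow> bool" where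
  "bivariate_normal S11 S12 S22 L \<longleftrightarrow>
     prob_space L \<and> sets L = sets borel \<and>
     (\<forall>a b. 0 \<le> quad2 S11 S12 S22 a b \<and>
        distr L borel (\<lambda>z. a * fst z + b * snd z) = normal_law (quad2 S11 S12 S22 a b))"

definition comb_weight :: "real \<Rightarrow> real \<Rightarrow> real \<Rightarrow> real" where
  "comb_weight s11 s12 s22 = (s22 - s12) / (s11 + s22 - 2 * s12)"

end

theory Submission
  imports Defs
begin

text \<open>
  Slutsky's lemma in the following form carries the proof: if \<open>(Z1, Z2)\<close> converges in distribution to
  \<open>N(0, \<Sigma>)\<close> and random coefficients \<open>(A, B)\<close> converge in probability to \<open>(a, b)\<close>, then
  \<open>A Z1 + B Z2\<close> converges to \<open>N(0, (a, b) \<Sigma> (a, b)\<^sup>T)\<close>. The estimated weight and the estimated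
  standard deviation are continuous functions of \<open>\<Sigma>\<close> where \<open>\<Sigma>\<^sub>1\<^sub>1 - 2 \<Sigma>\<^sub>1\<^sub>2 + \<Sigma>\<^sub>2\<^sub>2 > 0\<close>, so by the
  continuous mapping theorem they converge in probability, and the lemma gives both limit laws.
  Completing the square, \<open>(w, 1 - w) \<Sigma> (w, 1 - w)\<^sup>T = d (w - w\<^sup>*)\<^sup>2 + det \<Sigma> / d\<close> with
  \<open>d = \<Sigma>\<^sub>1\<^sub>1 - 2 \<Sigma>\<^sub>1\<^sub>2 + \<Sigma>\<^sub>2\<^sub>2\<close>, so the limiting variance \<open>det \<Sigma> / d\<close> is the minimum over \<open>w\<close>, in
  particular at most the values \<open>\<Sigma>\<^sub>1\<^sub>1\<close> (\<open>w = 1\<close>) and \<open>\<Sigma>\<^sub>2\<^sub>2\<close> (\<open>w = 0\<close>).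
\<close>

definition conv_in_prob_dist ::
  "(nat \<Rightarrow> 'a measure) \<Rightarrow> (nat \<Rightarrow> 'a \<Rightarrow> 'b::metric_space) \<Rightarrow> 'b \<Rightarrow> bool" where
  "conv_in_prob_dist M X c \<longleftrightarrow> (\<forall>n. X n \<in> borel_measurable (M n)) \<and>
     (\<forall>e>0. (\<lambda>n. measure (M n) {x \<in> space (M n). e < dist (X n x) c}) \<longlonglongrightarrow> 0)"

lemma conv_in_prob_dist_measurable:
  "conv_in_prob_dist M X c \<Longrightarrow> X n \<in> borel_measurable (M n)"
  by (simp add: conv_in_prob_dist_def)

lemma conv_in_prob_imp_conv_in_prob_dist:
  assumes "conv_in_prob M X c" "\<And>n. X n \<in> borel_measurable (M n)"
  shows "conv_in_prob_dist M X c"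
  using assms unfolding conv_in_prob_dist_def conv_in_prob_def by (simp add: dist_real_def)

lemma measurable_fst_borel[measurable]:
  "fst \<in> (borel :: ('a::topological_space \<times> 'b::topological_space) measure) \<rightarrow>\<^sub>M borel"
  by (intro borel_measurable_continuous_onI continuous_intros)

lemma measurable_snd_borel[measurable]:
  "snd \<in> (borel :: ('a::topological_space \<times> 'b::topological_space) measure) \<rightarrow>\<^sub>M borel"
  by (intro borel_measurable_continuous_onI continuous_intros)

lemma conv_in_prob_dist_Pair_measurable:
  assumes "conv_in_prob_dist M (\<lambda>n x. (X n x, Y n x)) (c, d)"
  shows "X n \<in> borel_measurable (M n)" "Y n \<in> borel_measurable (M n)"
  using measurable_compose[OF conv_in_prob_dist_measurable[OF assms] measurable_fst_borel]
    measurable_compose[OF conv_in_prob_dist_measurable[OF assms] measurable_snd_borel]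
  by simp_all

lemma measure_tendsto_zero_mono:
  assumes "\<And>n. prob_space (M n)" "\<And>n. A n \<subseteq> B n" "\<And>n. B n \<in> sets (M n)"
    and "(\<lambda>n. measure (M n) (B n)) \<longlonglongrightarrow> 0"
  shows "(\<lambda>n. measure (M n) (A n)) \<longlonglongrightarrow> 0"
proof (rule tendsto_sandwich[OF _ _ tendsto_const assms(4)])
  show "\<forall>\<^sub>F n in sequentially. measure (M n) (A n) \<le> measure (M n) (B n)"
    using assms(1-3)
    by (intro always_eventually allI finite_measure.finite_measure_mono prob_space.finite_measure)
qed simp

lemma measure_Un_tendsto_zero:
  assumes "\<And>n. A n \<in> sets (M n)" "\<And>n. B n \<in> sets (M n)"
    and "(\<lambda>n. measure (M n) (A n)) \<longlonglongrightarrow> 0" "(\<lambda>n. measure (M n) (B n)) \<longlonglongrightarrow> 0"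
  shows "(\<lambda>n. measure (M n) (A n \<union> B n)) \<longlonglongrightarrow> 0"
  using assms(1,2)
  by (intro tendsto_sandwich[OF _ _ tendsto_const tendsto_add_zero[OF assms(3,4)]] always_eventually allI)
    (auto intro: measure_Un_le)

lemma conv_in_prob_dist_Pair:
  fixes c :: "'b::{metric_space,second_countable_topology}"
    and d :: "'c::{metric_space,second_countable_topology}"
  assumes prob: "\<And>n. prob_space (M n)"
    and X: "conv_in_prob_dist M X c" and Y: "conv_in_prob_dist M Y d"
  shows "conv_in_prob_dist M (\<lambda>n x. (X n x, Y n x)) (c, d)"
  unfolding conv_in_prob_dist_def
proof safe
  note [measurable] = X[THEN conv_in_prob_dist_measurable] Y[THEN conv_in_prob_dist_measurable]
  show "(\<lambda>x. (X n x, Y n x)) \<in> borel_measurable (M n)" for n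
    by measurable
  fix e :: real assume "0 < e"
  have "(\<lambda>n. measure (M n) {x \<in> space (M n). e/2 < dist (X n x) c}) \<longlonglongrightarrow> 0"
    "(\<lambda>n. measure (M n) {x \<in> space (M n). e/2 < dist (Y n x) d}) \<longlonglongrightarrow> 0"
    using X Y half_gt_zero[OF \<open>0 < e\<close>] unfolding conv_in_prob_dist_def by blast+
  then have "(\<lambda>n. measure (M n) ({x \<in> space (M n). e/2 < dist (X n x) c} \<union>
      {x \<in> space (M n). e/2 < dist (Y n x) d})) \<longlonglongrightarrow> 0"
    by (intro measure_Un_tendsto_zero) measurable
  moreover have "{x \<in> space (M n). e < dist (X n x, Y n x) (c, d)} \<subseteq>
      {x \<in> space (M n). e/2 < dist (X n x) c} \<union> {x \<in> space (M n). e/2 < dist (Y n x) d}" for n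
  proof
    fix x assume "x \<in> {x \<in> space (M n). e < dist (X n x, Y n x) (c, d)}"
    moreover have "dist (X n x, Y n x) (c, d) \<le> dist (X n x) c + dist (Y n x) d"
      unfolding dist_Pair_Pair by (rule sqrt_sum_squares_le_sum) simp_all
    ultimately show "x \<in> {x \<in> space (M n). e/2 < dist (X n x) c} \<union> {x \<in> space (M n). e/2 < dist (Y n x) d}"
      by simp linarith
  qed
  ultimately show "(\<lambda>n. measure (M n) {x \<in> space (M n). e < dist (X n x, Y n x) (c, d)}) \<longlonglongrightarrow> 0"
    by (elim measure_tendsto_zero_mono[OF prob, rotated 2]) (assumption, measurable)
qed

lemma conv_in_prob_dist_isCont:
  fixes c :: "'b::{metric_space,second_countable_topology}"
  assumes prob: "\<And>n. prob_space (M n)"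
    and X: "conv_in_prob_dist M X c" and f: "isCont f c" "f \<in> borel_measurable borel"
  shows "conv_in_prob_dist M (\<lambda>n x. f (X n x)) (f c)"
  unfolding conv_in_prob_dist_def
proof safe
  note [measurable] = X[THEN conv_in_prob_dist_measurable] f(2)
  show "(\<lambda>x. f (X n x)) \<in> borel_measurable (M n)" for n
    by measurable
  fix e :: real assume "0 < e"
  then obtain d where d: "0 < d" "\<And>y. dist y c < d \<Longrightarrow> dist (f y) (f c) < e"
    using f(1) unfolding continuous_at_eps_delta by blast
  have "(\<lambda>n. measure (M n) {x \<in> space (M n). d/2 < dist (X n x) c}) \<longlonglongrightarrow> 0"
    using X half_gt_zero[OF d(1)] unfolding conv_in_prob_dist_def by blast
  moreover have "d/2 < dist (X n x) c" if "e < dist (f (X n x)) (f c)" for n x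
  proof -
    have "\<not> dist (X n x) c < d"
      using d(2) that by fastforce
    then show ?thesis using d(1) by linarith
  qed
  ultimately show "(\<lambda>n. measure (M n) {x \<in> space (M n). e < dist (f (X n x)) (f c)}) \<longlonglongrightarrow> 0"
    by (elim measure_tendsto_zero_mono[OF prob, rotated 2]) (auto, measurable)
qed

lemma (in finite_measure) exists_measure_gt_less:
  fixes T :: "'a \<Rightarrow> real"
  assumes T: "T \<in> borel_measurable M" and "0 < \<epsilon>"
  shows "\<exists>k. measure M {x \<in> space M. k < T x} < \<epsilon>"
proof -
  define A where "A k = {x \<in> space M. real k < T x}" for k :: nat
  have "range A \<subseteq> sets M"
    using T by (auto simp: A_def)
  moreover have "decseq A"
    by (auto simp: decseq_def A_def)
  moreover have "x \<notin> (\<Inter>k. A k)" for x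
  proof -
    obtain k :: nat where "T x < k"
      using reals_Archimedean2 by blast
    then show ?thesis
      by (auto simp: A_def not_less intro!: exI[of _ k])
  qed
  ultimately have "(\<lambda>k. measure M (A k)) \<longlonglongrightarrow> 0"
    using finite_Lim_measure_decseq by (metis ex_in_conv measure_empty)
  then obtain k where "measure M (A k) < \<epsilon>"
    using \<open>0 < \<epsilon>\<close> by (meson LIMSEQ_le_const not_less order_refl)
  then show ?thesis
    unfolding A_def by blast
qed

lemma (in prob_space) prob_le_expectation:
  fixes f :: "'a \<Rightarrow> real"
  assumes "A \<in> events" "integrable M f" "\<And>x. x \<in> space M \<Longrightarrow> indicator A x \<le> f x"
  shows "prob A \<le> expectation f"
proof -
  have "prob A = expectation (indicator A)"
    using assms(1) by simp
  also have "\<dots> \<le> expectation f"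
    using assms by (intro integral_mono integrable_real_indicator) (auto simp: emeasure_eq_measure)
  finally show ?thesis .
qed

lemma (in prob_space) expectation_le_prob:
  fixes f :: "'a \<Rightarrow> real"
  assumes "A \<in> events" "integrable M f" "\<And>x. x \<in> space M \<Longrightarrow> f x \<le> indicator A x"
  shows "expectation f \<le> prob A"
proof -
  have "expectation f \<le> expectation (indicator A)"
    using assms by (intro integral_mono integrable_real_indicator) (auto simp: emeasure_eq_measure)
  also have "\<dots> = prob A"
    using assms(1) by simp
  finally show ?thesis .
qed

text \<open>The ramp \<open>min 1 (max 0 (T - k))\<close> is bounded, continuous and squeezed between the indicators
  of \<open>{k + 1 < T}\<close> and \<open>{k < T}\<close>; so a small tail of the limit law passes to the sequence.\<close>
lemma conv_in_distr2_tight: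
  fixes Z1 Z2 :: "nat \<Rightarrow> 'a \<Rightarrow> real"
  assumes prob: "\<And>n. prob_space (M n)"
    and Z[measurable]: "\<And>n. Z1 n \<in> borel_measurable (M n)" "\<And>n. Z2 n \<in> borel_measurable (M n)"
    and L: "prob_space L" "sets L = sets borel"
    and conv: "conv_in_distr2 M (\<lambda>n x. (Z1 n x, Z2 n x)) L"
    and "0 < \<epsilon>"
  shows "\<exists>R. \<forall>\<^sub>F n in sequentially. measure (M n) {x \<in> space (M n). R < \<bar>Z1 n x\<bar> + \<bar>Z2 n x\<bar>} < \<epsilon>"
proof -
  interpret L: prob_space L by (rule L(1))
  define T where "T z = \<bar>fst z\<bar> + \<bar>snd z\<bar>" for z :: "real \<times> real"
  have T_cont: "continuous_on UNIV T"
    unfolding T_def by (intro continuous_intros)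
  have borel_L: "measurable L = measurable borel"
    using L(2) by (intro ext measurable_cong_sets) auto
  have T_meas[measurable]: "T \<in> borel_measurable borel" "T \<in> borel_measurable L"
    using T_cont by (auto simp: borel_L intro: borel_measurable_continuous_onI)
  obtain k where k: "measure L {z \<in> space L. k < T z} < \<epsilon>"
    using L.exists_measure_gt_less[OF T_meas(2) \<open>0 < \<epsilon>\<close>] by blast
  define h where "h z = min 1 (max 0 (T z - k))" for z
  have h_cont: "continuous_on UNIV h"
    unfolding h_def using T_cont by (intro continuous_intros)
  then have h_meas[measurable]: "h \<in> borel_measurable borel"
    by (rule borel_measurable_continuous_onI)
  have h_bounded: "bounded (range h)"
    unfolding bounded_iff by (rule exI[of _ 1]) (auto simp: h_def)
  have "(\<lambda>n. \<integral>x. h (Z1 n x, Z2 n x) \<partial>M n) \<longlonglongrightarrow> (\<integral>z. h z \<partial>L)"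
    using conv h_cont h_bounded unfolding conv_in_distr2_def by blast
  moreover have "(\<integral>z. h z \<partial>L) \<le> measure L {z \<in> space L. k < T z}"
    by (rule L.expectation_le_prob)
      (auto simp: borel_L h_def split: split_indicator intro!: L.integrable_const_bound[of _ 1])
  ultimately have "\<forall>\<^sub>F n in sequentially. (\<integral>x. h (Z1 n x, Z2 n x) \<partial>M n) < \<epsilon>"
    using k by (elim order_tendstoD(2)) linarith
  then show ?thesis
  proof (intro exI[of _ "k + 1"], elim eventually_mono)
    fix n assume small: "(\<integral>x. h (Z1 n x, Z2 n x) \<partial>M n) < \<epsilon>"
    interpret prob_space "M n" by (rule prob)
    have "measure (M n) {x \<in> space (M n). k + 1 < \<bar>Z1 n x\<bar> + \<bar>Z2 n x\<bar>} \<le> (\<integral>x. h (Z1 n x, Z2 n x) \<partial>M n)"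
      by (rule prob_le_expectation) (auto simp: h_def T_def split: split_indicator intro!: integrable_const_bound[of _ 1])
    with small show "measure (M n) {x \<in> space (M n). k + 1 < \<bar>Z1 n x\<bar> + \<bar>Z2 n x\<bar>} < \<epsilon>"
      by linarith
  qed
qed

lemma (in prob_space) abs_expectation_diff_le:
  fixes Y W :: "'a \<Rightarrow> real"
  assumes [measurable]: "Y \<in> borel_measurable M" "W \<in> borel_measurable M" "E \<in> events"
    and bounded: "\<And>x. x \<in> space M \<Longrightarrow> \<bar>Y x\<bar> \<le> 1" "\<And>x. x \<in> space M \<Longrightarrow> \<bar>W x\<bar> \<le> 1"
    and close: "\<And>x. x \<in> space M - E \<Longrightarrow> \<bar>Y x - W x\<bar> \<le> \<eta>" and "0 \<le> \<eta>"
  shows "\<bar>expectation Y - expectation W\<bar> \<le> \<eta> + 2 * prob E"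
proof -
  have int: "integrable M Y" "integrable M W" "integrable M (indicator E :: 'a \<Rightarrow> real)"
    using bounded by (auto intro!: integrable_const_bound[of _ 1] simp: emeasure_eq_measure)
  have "\<bar>Y x - W x\<bar> \<le> \<eta> + 2 * indicator E x" if "x \<in> space M" for x
    using bounded[OF that] close[of x] that \<open>0 \<le> \<eta>\<close> by (cases "x \<in> E") auto
  then have "expectation (\<lambda>x. \<bar>Y x - W x\<bar>) \<le> expectation (\<lambda>x. \<eta> + 2 * indicator E x)"
    using int by (intro integral_mono) auto
  moreover have "\<bar>expectation Y - expectation W\<bar> \<le> expectation (\<lambda>x. \<bar>Y x - W x\<bar>)"
    using int integral_abs_bound[of M "\<lambda>x. Y x - W x"] by simp
  ultimately show ?thesis
    using int by (simp add: prob_space)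
qed

lemma abs_linear_combination_diff_le:
  fixes \<alpha> \<beta> a b x y :: real
  shows "\<bar>(\<alpha> * x + \<beta> * y) - (a * x + b * y)\<bar> \<le> dist (\<alpha>, \<beta>) (a, b) * (\<bar>x\<bar> + \<bar>y\<bar>)"
proof -
  have "\<bar>\<alpha> - a\<bar> \<le> dist (\<alpha>, \<beta>) (a, b)" "\<bar>\<beta> - b\<bar> \<le> dist (\<alpha>, \<beta>) (a, b)"
    using dist_fst_le[of "(\<alpha>, \<beta>)" "(a, b)"] dist_snd_le[of "(\<alpha>, \<beta>)" "(a, b)"]
    by (simp_all add: dist_real_def)
  then have "\<bar>\<alpha> - a\<bar> * \<bar>x\<bar> + \<bar>\<beta> - b\<bar> * \<bar>y\<bar> \<le> dist (\<alpha>, \<beta>) (a, b) * (\<bar>x\<bar> + \<bar>y\<bar>)"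
    by (simp add: distrib_left add_mono mult_right_mono)
  moreover have "\<bar>(\<alpha> * x + \<beta> * y) - (a * x + b * y)\<bar> \<le> \<bar>\<alpha> - a\<bar> * \<bar>x\<bar> + \<bar>\<beta> - b\<bar> * \<bar>y\<bar>"
    by (metis abs_mult abs_triangle_ineq left_diff_distrib add_diff_add)
  ultimately show ?thesis
    by linarith
qed

lemma (in prob_space) abs_expectation_diff_linear_combination_le:
  fixes Z1 Z2 A B :: "'a \<Rightarrow> real" and g :: "real \<Rightarrow> real"
  assumes [measurable]: "Z1 \<in> borel_measurable M" "Z2 \<in> borel_measurable M"
      "A \<in> borel_measurable M" "B \<in> borel_measurable M" "g \<in> borel_measurable borel"
    and g: "\<And>x. \<bar>g x\<bar> \<le> 1" "\<And>x y. \<bar>x - y\<bar> < \<delta> \<Longrightarrow> \<bar>g x - g y\<bar> \<le> \<eta>" "0 \<le> \<eta>"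
    and r: "0 \<le> r" "r * R < \<delta>"
  shows "\<bar>expectation (\<lambda>x. g (A x * Z1 x + B x * Z2 x)) - expectation (\<lambda>x. g (a * Z1 x + b * Z2 x))\<bar>
    \<le> \<eta> + 2 * (prob {x \<in> space M. R < \<bar>Z1 x\<bar> + \<bar>Z2 x\<bar>} + prob {x \<in> space M. r < dist (A x, B x) (a, b)})"
proof -
  define E where "E = {x \<in> space M. R < \<bar>Z1 x\<bar> + \<bar>Z2 x\<bar>} \<union> {x \<in> space M. r < dist (A x, B x) (a, b)}"
  have "\<bar>g (A x * Z1 x + B x * Z2 x) - g (a * Z1 x + b * Z2 x)\<bar> \<le> \<eta>" if "x \<in> space M - E" for x
  proof (rule g(2))
    from that have "dist (A x, B x) (a, b) \<le> r" "\<bar>Z1 x\<bar> + \<bar>Z2 x\<bar> \<le> R"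
      by (auto simp: E_def)
    then have "dist (A x, B x) (a, b) * (\<bar>Z1 x\<bar> + \<bar>Z2 x\<bar>) \<le> r * R"
      using r(1) by (intro mult_mono) auto
    then show "\<bar>(A x * Z1 x + B x * Z2 x) - (a * Z1 x + b * Z2 x)\<bar> < \<delta>"
      using abs_linear_combination_diff_le[of "A x" "Z1 x" "B x" "Z2 x" a b] r(2) by linarith
  qed
  then have "\<bar>expectation (\<lambda>x. g (A x * Z1 x + B x * Z2 x)) - expectation (\<lambda>x. g (a * Z1 x + b * Z2 x))\<bar>
      \<le> \<eta> + 2 * prob E"
    using g(1,3) by (intro abs_expectation_diff_le) (auto simp: E_def)
  also have "prob E \<le> prob {x \<in> space M. R < \<bar>Z1 x\<bar> + \<bar>Z2 x\<bar>} + prob {x \<in> space M. r < dist (A x, B x) (a, b)}"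
    unfolding E_def by (rule measure_Un_le) measurable
  finally show ?thesis
    by simp
qed

text \<open>Tightness of \<open>(Z1, Z2)\<close> and uniform continuity of \<open>g\<close> allow replacing the random coefficients
  by their limits at a cost that vanishes in probability.\<close>
lemma conv_in_distr2_linear_combination_Slutsky:
  fixes Z1 Z2 A B :: "nat \<Rightarrow> 'a \<Rightarrow> real" and g :: "real \<Rightarrow> real"
  assumes prob: "\<And>n. prob_space (M n)"
    and Z[measurable]: "\<And>n. Z1 n \<in> borel_measurable (M n)" "\<And>n. Z2 n \<in> borel_measurable (M n)"
    and L: "prob_space L" "sets L = sets borel"
    and conv: "conv_in_distr2 M (\<lambda>n x. (Z1 n x, Z2 n x)) L"
    and AB: "conv_in_prob_dist M (\<lambda>n x. (A n x, B n x)) (a, b)"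
    and g: "uniformly_continuous_on UNIV g" "\<And>x. \<bar>g x\<bar> \<le> 1"
  shows "(\<lambda>n. \<integral>x. g (A n x * Z1 n x + B n x * Z2 n x) \<partial>M n) \<longlonglongrightarrow> (\<integral>z. g (a * fst z + b * snd z) \<partial>L)"
proof -
  have g_cont: "continuous_on UNIV g"
    using g(1) by (rule uniformly_continuous_imp_continuous)
  have [measurable]: "g \<in> borel_measurable borel"
    using g_cont by (rule borel_measurable_continuous_onI)
  note [measurable] = conv_in_prob_dist_Pair_measurable[OF AB]
  have "continuous_on UNIV (\<lambda>z. g (a * fst z + b * snd z))"
    by (rule continuous_on_compose2[OF g_cont], intro continuous_intros) auto
  moreover have "bounded (range (\<lambda>z. g (a * fst z + b * snd z)))"
    unfolding bounded_iff using g(2) by (intro exI[of _ 1]) auto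
  ultimately have fixed: "(\<lambda>n. \<integral>x. g (a * Z1 n x + b * Z2 n x) \<partial>M n) \<longlonglongrightarrow> (\<integral>z. g (a * fst z + b * snd z) \<partial>L)"
    using conv unfolding conv_in_distr2_def by auto
  have "(\<lambda>n. (\<integral>x. g (A n x * Z1 n x + B n x * Z2 n x) \<partial>M n) - (\<integral>x. g (a * Z1 n x + b * Z2 n x) \<partial>M n)) \<longlonglongrightarrow> 0"
  proof (rule tendstoI)
    fix \<epsilon> :: real assume "0 < \<epsilon>"
    then obtain \<delta> where "0 < \<delta>" and \<delta>: "\<And>x y. \<bar>x - y\<bar> < \<delta> \<Longrightarrow> \<bar>g x - g y\<bar> < \<epsilon>/2"
      using g(1) unfolding uniformly_continuous_on_def dist_real_def by (meson UNIV_I half_gt_zero)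
    obtain R where R: "\<forall>\<^sub>F n in sequentially. measure (M n) {x \<in> space (M n). R < \<bar>Z1 n x\<bar> + \<bar>Z2 n x\<bar>} < \<epsilon>/8"
      using conv_in_distr2_tight[OF prob Z L conv, of "\<epsilon>/8"] \<open>0 < \<epsilon>\<close> by auto
    define r where "r = \<delta> / (2 * max R 1)"
    have "0 < r" "r * max R 1 < \<delta>"
      using \<open>0 < \<delta>\<close> by (simp_all add: r_def)
    moreover have "r * R \<le> r * max R 1"
      using \<open>0 < r\<close> by (intro mult_left_mono) auto
    ultimately have r: "0 \<le> r" "r * R < \<delta>"
      by linarith+
    have "(\<lambda>n. measure (M n) {x \<in> space (M n). r < dist (A n x, B n x) (a, b)}) \<longlonglongrightarrow> 0"
      using AB \<open>0 < r\<close> unfolding conv_in_prob_dist_def by blast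
    then have "\<forall>\<^sub>F n in sequentially. measure (M n) {x \<in> space (M n). r < dist (A n x, B n x) (a, b)} < \<epsilon>/8"
      by (rule order_tendstoD(2)) (use \<open>0 < \<epsilon>\<close> in simp)
    with R show "\<forall>\<^sub>F n in sequentially. dist ((\<integral>x. g (A n x * Z1 n x + B n x * Z2 n x) \<partial>M n)
        - (\<integral>x. g (a * Z1 n x + b * Z2 n x) \<partial>M n)) 0 < \<epsilon>"
    proof eventually_elim
      case (elim n)
      interpret prob_space "M n" by (rule prob)
      have "\<bar>(\<integral>x. g (A n x * Z1 n x + B n x * Z2 n x) \<partial>M n) - (\<integral>x. g (a * Z1 n x + b * Z2 n x) \<partial>M n)\<bar>
          \<le> \<epsilon>/2 + 2 * (prob {x \<in> space (M n). R < \<bar>Z1 n x\<bar> + \<bar>Z2 n x\<bar>}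
            + prob {x \<in> space (M n). r < dist (A n x, B n x) (a, b)})"
        using g(2) \<delta> r \<open>0 < \<epsilon>\<close> by (intro abs_expectation_diff_linear_combination_le) (auto intro: less_imp_le)
      with elim show ?case
        by (simp add: dist_real_def)
    qed
  qed
  from tendsto_add[OF this fixed] show ?thesis
    by simp
qed

lemma real_distribution_normal_law: "0 \<le> v \<Longrightarrow> real_distribution (normal_law v)"
  unfolding normal_law_def real_distribution_def real_distribution_axioms_def
  by (auto intro: prob_space_normal_density prob_space_return)

lemma abs_cts_step_le: "\<bar>cts_step a b x\<bar> \<le> 1"
  by (auto simp: cts_step_def divide_simps)

lemma weak_conv_m_linear_combination:
  fixes Z1 Z2 A B :: "nat \<Rightarrow> 'a \<Rightarrow> real"
  assumes prob: "\<And>n. prob_space (M n)"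
    and Z[measurable]: "\<And>n. Z1 n \<in> borel_measurable (M n)" "\<And>n. Z2 n \<in> borel_measurable (M n)"
    and L: "bivariate_normal S11 S12 S22 L"
    and conv: "conv_in_distr2 M (\<lambda>n x. (Z1 n x, Z2 n x)) L"
    and AB: "conv_in_prob_dist M (\<lambda>n x. (A n x, B n x)) (a, b)"
  shows "weak_conv_m (\<lambda>n. distr (M n) borel (\<lambda>x. A n x * Z1 n x + B n x * Z2 n x))
      (normal_law (quad2 S11 S12 S22 a b))"
proof (rule integral_cts_step_conv_imp_weak_conv)
  have L_prob: "prob_space L" "sets L = sets borel"
    and L_lin: "distr L borel (\<lambda>z. a * fst z + b * snd z) = normal_law (quad2 S11 S12 S22 a b)"
    and q_nonneg: "0 \<le> quad2 S11 S12 S22 a b"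
    using L unfolding bivariate_normal_def by auto
  from q_nonneg show "real_distribution (normal_law (quad2 S11 S12 S22 a b))"
    by (rule real_distribution_normal_law)
  note [measurable] = conv_in_prob_dist_Pair_measurable[OF AB]
  show "real_distribution (distr (M n) borel (\<lambda>x. A n x * Z1 n x + B n x * Z2 n x))" for n
  proof -
    interpret prob_space "M n" by (rule prob)
    show ?thesis
      unfolding real_distribution_def real_distribution_axioms_def by (auto intro!: prob_space_distr)
  qed
  fix x y :: real assume "x < y"
  have [measurable]: "cts_step x y \<in> borel_measurable borel"
    using cts_step_uniformly_continuous[OF \<open>x < y\<close>]
    by (intro borel_measurable_continuous_onI uniformly_continuous_imp_continuous)
  have "(\<lambda>n. \<integral>u. cts_step x y (A n u * Z1 n u + B n u * Z2 n u) \<partial>M n)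
      \<longlonglongrightarrow> (\<integral>z. cts_step x y (a * fst z + b * snd z) \<partial>L)"
    using \<open>x < y\<close> by (intro conv_in_distr2_linear_combination_Slutsky[OF prob Z L_prob conv AB]
        cts_step_uniformly_continuous abs_cts_step_le)
  moreover have "(\<integral>z. cts_step x y (a * fst z + b * snd z) \<partial>L) = integral\<^sup>L (normal_law (quad2 S11 S12 S22 a b)) (cts_step x y)"
  proof -
    have "(\<lambda>z. a * fst z + b * snd z) \<in> borel_measurable L"
      unfolding measurable_cong_sets[OF L_prob(2) refl]
      by (intro borel_measurable_continuous_onI continuous_intros)
    then show ?thesis
      unfolding L_lin[symmetric] by (simp add: integral_distr)
  qed
  ultimately show "(\<lambda>n. integral\<^sup>L (distr (M n) borel (\<lambda>x. A n x * Z1 n x + B n x * Z2 n x)) (cts_step x y))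
      \<longlonglongrightarrow> integral\<^sup>L (normal_law (quad2 S11 S12 S22 a b)) (cts_step x y)"
    by (simp add: integral_distr)
qed

lemma weak_conv_m_plug_in_linear_combination:
  fixes Z1 Z2 :: "nat \<Rightarrow> 'a \<Rightarrow> real"
    and S :: "nat \<Rightarrow> 'a \<Rightarrow> 'b::{metric_space,second_countable_topology}" and f g :: "'b \<Rightarrow> real"
  assumes prob: "\<And>n. prob_space (M n)"
    and Z: "\<And>n. Z1 n \<in> borel_measurable (M n)" "\<And>n. Z2 n \<in> borel_measurable (M n)"
    and L: "bivariate_normal S11 S12 S22 L"
    and conv: "conv_in_distr2 M (\<lambda>n x. (Z1 n x, Z2 n x)) L"
    and S: "conv_in_prob_dist M S c"
    and fg: "isCont f c" "isCont g c" "f \<in> borel_measurable borel" "g \<in> borel_measurable borel"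
  shows "weak_conv_m (\<lambda>n. distr (M n) borel (\<lambda>x. f (S n x) * Z1 n x + g (S n x) * Z2 n x))
      (normal_law (quad2 S11 S12 S22 (f c) (g c)))"
proof (rule weak_conv_m_linear_combination[OF prob Z L conv])
  note [measurable] = fg(3,4)
  have "isCont (\<lambda>p. (f p, g p)) c"
    using fg(1,2) by (rule continuous_Pair)
  from conv_in_prob_dist_isCont[OF prob S this] show "conv_in_prob_dist M (\<lambda>n x. (f (S n x), g (S n x))) (f c, g c)"
    by simp
qed

lemma quad2_scale: "quad2 S11 S12 S22 (c * x) (c * y) = c\<^sup>2 * quad2 S11 S12 S22 x y"
  unfolding quad2_def by (simp add: power2_eq_square algebra_simps)

lemma quad2_affine_weight:
  assumes "0 < S11 - 2 * S12 + S22"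
  shows "quad2 S11 S12 S22 w (1 - w) = (S11 - 2 * S12 + S22) * (w - comb_weight S11 S12 S22)\<^sup>2
      + (S11 * S22 - S12\<^sup>2) / (S11 - 2 * S12 + S22)"
proof -
  define d where "d = S11 - 2 * S12 + S22"
  have "0 < d"
    using assms by (simp add: d_def)
  have "comb_weight S11 S12 S22 = (S22 - S12) / d"
    by (simp add: comb_weight_def d_def algebra_simps)
  then have "d * comb_weight S11 S12 S22 = S22 - S12"
    using \<open>0 < d\<close> by simp
  then have "(d * (w - comb_weight S11 S12 S22))\<^sup>2 = (d * w - (S22 - S12))\<^sup>2"
    by (simp add: right_diff_distrib)
  then have "d * quad2 S11 S12 S22 w (1 - w) = d * (d * (w - comb_weight S11 S12 S22)\<^sup>2) + (S11 * S22 - S12\<^sup>2)"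
    by (simp add: d_def quad2_def power2_eq_square algebra_simps)
  then show ?thesis
    using \<open>0 < d\<close> unfolding d_def[symmetric] by (simp add: field_simps)
qed

text \<open>A covariance matrix \<open>[[s11, s12], [s12, s22]]\<close> is encoded as the triple \<open>(s11, s12, s22)\<close>.\<close>

definition optimal_weight :: "real \<times> real \<times> real \<Rightarrow> real" where
  "optimal_weight s = comb_weight (fst s) (fst (snd s)) (snd (snd s))"

definition optimal_variance :: "real \<times> real \<times> real \<Rightarrow> real" where
  "optimal_variance s = quad2 (fst s) (fst (snd s)) (snd (snd s)) (optimal_weight s) (1 - optimal_weight s)"

lemma optimal_variance_eq:
  assumes "0 < S11 - 2 * S12 + S22"
  shows "optimal_variance (S11, S12, S22) = (S11 * S22 - S12\<^sup>2) / (S11 - 2 * S12 + S22)"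
  using quad2_affine_weight[OF assms, of "comb_weight S11 S12 S22"]
  by (simp add: optimal_variance_def optimal_weight_def)

lemma optimal_variance_pos:
  assumes "0 < S11 - 2 * S12 + S22" "0 < S11 * S22 - S12\<^sup>2"
  shows "0 < optimal_variance (S11, S12, S22)"
  using assms by (simp add: optimal_variance_eq)

lemma optimal_variance_le_quad2:
  assumes "0 < S11 - 2 * S12 + S22"
  shows "optimal_variance (S11, S12, S22) \<le> quad2 S11 S12 S22 w (1 - w)"
  using assms by (simp add: optimal_variance_eq quad2_affine_weight)

lemma INF_quad2_eq_optimal_variance:
  assumes "0 < S11 - 2 * S12 + S22"
  shows "(INF w. quad2 S11 S12 S22 w (1 - w)) = optimal_variance (S11, S12, S22)"
proof (rule cInf_eq_minimum)
  show "optimal_variance (S11, S12, S22) \<in> range (\<lambda>w. quad2 S11 S12 S22 w (1 - w))"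
    by (rule image_eqI[OF _ UNIV_I, of _ _ "comb_weight S11 S12 S22"])
      (simp add: optimal_variance_def optimal_weight_def)
qed (use optimal_variance_le_quad2[OF assms] in blast)

lemma optimal_variance_le:
  assumes "0 < S11 - 2 * S12 + S22"
  shows "optimal_variance (S11, S12, S22) \<le> S11" "optimal_variance (S11, S12, S22) \<le> S22"
  using optimal_variance_le_quad2[OF assms, of 1] optimal_variance_le_quad2[OF assms, of 0]
  by (simp_all add: quad2_def)

lemma isCont_optimal_weight:
  "S11 - 2 * S12 + S22 \<noteq> 0 \<Longrightarrow> isCont optimal_weight (S11, S12, S22)"
  unfolding optimal_weight_def[abs_def] comb_weight_def by (intro continuous_intros) auto

lemma isCont_optimal_variance:
  "S11 - 2 * S12 + S22 \<noteq> 0 \<Longrightarrow> isCont optimal_variance (S11, S12, S22)"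
  unfolding optimal_variance_def[abs_def] quad2_def by (intro continuous_intros isCont_optimal_weight)

lemma borel_measurable_optimal_weight[measurable]: "optimal_weight \<in> borel_measurable borel"
  unfolding optimal_weight_def[abs_def] comb_weight_def by measurable

lemma borel_measurable_optimal_variance[measurable]: "optimal_variance \<in> borel_measurable borel"
  unfolding optimal_variance_def[abs_def] quad2_def by measurable

lemma weak_conv_m_scaled_optimal_combination:
  fixes Z1 Z2 :: "nat \<Rightarrow> 'a \<Rightarrow> real"
    and S :: "nat \<Rightarrow> 'a \<Rightarrow> real \<times> real \<times> real" and h :: "real \<times> real \<times> real \<Rightarrow> real"
  assumes prob: "\<And>n. prob_space (M n)"
    and Z: "\<And>n. Z1 n \<in> borel_measurable (M n)" "\<And>n. Z2 n \<in> borel_measurable (M n)"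
    and L: "bivariate_normal S11 S12 S22 L"
    and conv: "conv_in_distr2 M (\<lambda>n x. (Z1 n x, Z2 n x)) L"
    and S: "conv_in_prob_dist M S (S11, S12, S22)" and pos: "0 < S11 - 2 * S12 + S22"
    and h: "isCont h (S11, S12, S22)" "h \<in> borel_measurable borel"
  shows "weak_conv_m
      (\<lambda>n. distr (M n) borel (\<lambda>x. h (S n x) *
        (optimal_weight (S n x) * Z1 n x + (1 - optimal_weight (S n x)) * Z2 n x)))
      (normal_law ((h (S11, S12, S22))\<^sup>2 * optimal_variance (S11, S12, S22)))"
proof -
  note [measurable] = h(2)
  have "weak_conv_m
      (\<lambda>n. distr (M n) borel (\<lambda>x. (h (S n x) * optimal_weight (S n x)) * Z1 n x
        + (h (S n x) * (1 - optimal_weight (S n x))) * Z2 n x))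
      (normal_law (quad2 S11 S12 S22 (h (S11, S12, S22) * optimal_weight (S11, S12, S22))
        (h (S11, S12, S22) * (1 - optimal_weight (S11, S12, S22)))))"
    using pos h(1) isCont_optimal_weight[of S11 S12 S22]
    by (intro weak_conv_m_plug_in_linear_combination[OF prob Z L conv S] continuous_intros) auto
  then show ?thesis
    by (simp add: quad2_scale optimal_variance_def distrib_left mult.assoc)
qed

theorem theorem4p1:
  fixes M :: "nat \<Rightarrow> 'a measure"
    and tadj tunadj Sh11 Sh12 Sh22 :: "nat \<Rightarrow> 'a \<Rightarrow> real"
    and tau S11 S12 S22 :: real
  assumes prob: "\<And>n. prob_space (M n)"
    and meas: "\<And>n. tadj n \<in> borel_measurable (M n)" "\<And>n. tunadj n \<in> borel_measurable (M n)"
      "\<And>n. Sh11 n \<in> borel_measurable (M n)" "\<And>n. Sh12 n \<in> borel_measurable (M n)"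
      "\<And>n. Sh22 n \<in> borel_measurable (M n)"
    and clt: "\<exists>L. bivariate_normal S11 S12 S22 L \<and>
      conv_in_distr2 M (\<lambda>n x. (sqrt (real n) * (tadj n x - tau), sqrt (real n) * (tunadj n x - tau))) L"
    and pos: "S11 - 2 * S12 + S22 > 0"
    and nondeg: "S11 * S22 - S12\<^sup>2 > 0"
    and cons: "conv_in_prob M Sh11 S11" "conv_in_prob M Sh12 S12" "conv_in_prob M Sh22 S22"
  shows "weak_conv_m
           (\<lambda>n. distr (M n) borel
              (\<lambda>x. let w = comb_weight (Sh11 n x) (Sh12 n x) (Sh22 n x);
                       tstar = w * tadj n x + (1 - w) * tunadj n x
                   in sqrt (real n) * inverse (sqrt (quad2 (Sh11 n x) (Sh12 n x) (Sh22 n x) w (1 - w)))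
                        * (tstar - tau)))
           std_normal_distribution
       \<and> (let V = (INF w. quad2 S11 S12 S22 w (1 - w)) in
           weak_conv_m
             (\<lambda>n. distr (M n) borel
                (\<lambda>x. let w = comb_weight (Sh11 n x) (Sh12 n x) (Sh22 n x);
                         tstar = w * tadj n x + (1 - w) * tunadj n x
                     in sqrt (real n) * (tstar - tau)))
             (normal_law V)
           \<and> V \<le> S11 \<and> V \<le> S22)"
proof -
  obtain L where L: "bivariate_normal S11 S12 S22 L" and conv:
    "conv_in_distr2 M (\<lambda>n x. (sqrt (real n) * (tadj n x - tau), sqrt (real n) * (tunadj n x - tau))) L"
    using clt by blast
  have Sh: "conv_in_prob_dist M (\<lambda>n x. (Sh11 n x, Sh12 n x, Sh22 n x)) (S11, S12, S22)"
    using cons meas by (intro conv_in_prob_dist_Pair conv_in_prob_imp_conv_in_prob_dist prob)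
  have Z: "(\<lambda>x. sqrt (real n) * (tadj n x - tau)) \<in> borel_measurable (M n)"
    "(\<lambda>x. sqrt (real n) * (tunadj n x - tau)) \<in> borel_measurable (M n)" for n
    using meas by measurable
  note weak_conv = weak_conv_m_scaled_optimal_combination[OF prob Z L conv Sh pos]
  have V_pos: "0 < optimal_variance (S11, S12, S22)"
    using pos nondeg by (rule optimal_variance_pos)
  have inv_cont: "isCont (\<lambda>s. inverse (sqrt (optimal_variance s))) (S11, S12, S22)"
    using V_pos pos by (intro continuous_intros isCont_optimal_variance) auto
  have inv_meas: "(\<lambda>s. inverse (sqrt (optimal_variance s))) \<in> borel_measurable borel"
    by measurable
  from weak_conv[OF inv_cont inv_meas] weak_conv[of "\<lambda>_. 1"] show ?thesis
    using V_pos INF_quad2_eq_optimal_variance[OF pos] optimal_variance_le[OF pos]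
    by (simp add: power_inverse Let_def optimal_weight_def optimal_variance_def normal_law_def algebra_simps)
qed

end
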